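(* Let $\mu$ be a Borel probability measure on $\mathbb{R}^d$, $p$ a probability density with respect to $\mu$, and $Q$ a probability density on $\mathbb{R}^d$ with respect to Lebesgue measure. Let $x\sim p\,d\mu$ and $w\sim Q$ be independent and $\tilde x=x+w$, and let $p(\cdot\mid\tilde x)$ denote the conditional (deconvolution) density of $x$ given $\tilde x$ with respect to $\mu$, given by $p(x\mid\tilde x)=p(x)Q(\tilde x-x)/\int Q(\tilde x-x')p(x')\,d\mu(x')$. Fix $\tilde x,\tilde x'\in\mathbb{R}^d$ and suppose $\nabla^2Q$ and $\nabla\log Q$ exist and are continuous on $\mathcal{X}=\{(1-t)\tilde x+t\tilde x'-x: x\in\operatorname{supp}p,\ t\in[0,1]\}$. Then \[ \mathrm{TV}\big(p(\cdot\mid\tilde x),p(\cdot\mid\tilde x')\big)\le\|\tilde x-\tilde x'\|\cdot\sup_{z\in\mathcal{X}}\|\nabla\log Q(z)\|. \]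
   Context: $\operatorname{supp}p$ is the support of the measure $p\,d\mu$ (closure of the set of points all of whose open neighborhoods have positive measure). $\mathrm{TV}$ is total variation distance. *)

theory Defs
  imports "HOL-Analysis.Analysis" "HOL-Probability.Probability"
begin

definition dens_support :: "'a::topological_space measure \<Rightarrow> ('a \<Rightarrow> real) \<Rightarrow> 'a set" where
  "dens_support M p =
     closure {x. \<forall>U. open U \<and> x \<in> U \<longrightarrow> emeasure (density M (\<lambda>y. ennreal (p y))) U > 0}"

definition cond_dens :: "'a::euclidean_space measure \<Rightarrow> ('a \<Rightarrow> real) \<Rightarrow> ('a \<Rightarrow> real) \<Rightarrow> 'a \<Rightarrow> 'a \<Rightarrow> real" where
  "cond_dens M p Q xt x = p x * Q (xt - x) / (\<integral>x'. Q (xt - x') * p x' \<partial>M)"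

text \<open>Total variation distance between the measures f d\<mu> and g d\<mu>
  (= sup over events of the difference of probabilities = half the L1 distance).\<close>
definition tv_dist :: "'a measure \<Rightarrow> ('a \<Rightarrow> real) \<Rightarrow> ('a \<Rightarrow> real) \<Rightarrow> ennreal" where
  "tv_dist M f g = (\<integral>\<^sup>+ x. ennreal (\<bar>f x - g x\<bar> / 2) \<partial>M)"

definition seg_set :: "'a::euclidean_space set \<Rightarrow> 'a \<Rightarrow> 'a \<Rightarrow> 'a set" where
  "seg_set S xt xt' = {(1 - t) *\<^sub>R xt + t *\<^sub>R xt' - x | x t. x \<in> S \<and> t \<in> {0..1}}"

end

theory Submission
  imports Defs
begin

text \<open>
  For x in the support of p, ln Q is B-Lipschitz on the segment from xt - x to xt' - x,
  where B bounds the norm of its gradient G; so the likelihood ratio Q (xt' - x) / Q (xt - x)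
  lies in [exp (-c), exp c] with c = B * norm (xt - xt'). Hence the two posterior densities
  satisfy \<rho> exp (-c) f \<le> g \<le> \<rho> exp c f, \<rho> being the ratio of the normalising constants.
  Since TV(f, g) is the integral of both max 0 (f - g) and max 0 (g - f), it is at most
  min (max 0 (1 - \<rho> exp (-c))) (max 0 (\<rho> exp c - 1)), and this is at most c for every
  \<rho> > 0 because exp (2 c) (1 - c) \<le> 1 + c.
\<close>

lemma exp_double_mult_one_minus_le:
  fixes c :: real
  assumes "c \<ge> 0"
  shows "exp (2 * c) * (1 - c) \<le> 1 + c"
proof -
  let ?f = "\<lambda>c::real. (1 + c) * exp (- c) - (1 - c) * exp c"
  have "?f 0 \<le> ?f c"
  proof (rule DERIV_nonneg_imp_nondecreasing[OF assms])
    fix x :: real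
    assume "0 \<le> x" "x \<le> c"
    show "\<exists>y. DERIV ?f x :> y \<and> y \<ge> 0"
    proof (intro exI conjI)
      show "DERIV ?f x :> x * (exp x - exp (- x))"
        by (auto intro!: derivative_eq_intros simp: algebra_simps)
      show "x * (exp x - exp (- x)) \<ge> 0"
        using \<open>0 \<le> x\<close> by simp
    qed
  qed
  have "exp (2 * c) * (1 - c) = (1 - c) * exp c * exp c"
    by (simp add: mult_ac flip: exp_add)
  also have "\<dots> \<le> (1 + c) * exp (- c) * exp c"
    using \<open>?f 0 \<le> ?f c\<close> by (simp add: mult_right_mono)
  also have "\<dots> = 1 + c"
    by (simp add: mult.assoc flip: exp_add)
  finally show ?thesis .
qed

lemma min_ratio_gaps_le:
  fixes c \<rho> :: real
  assumes "c \<ge> 0" "\<rho> > 0"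
  shows "min (max 0 (1 - \<rho> * exp (- c))) (max 0 (\<rho> * exp c - 1)) \<le> c"
proof (cases "\<rho> * exp (- c) \<ge> 1 - c")
  case True
  then show ?thesis using assms by linarith
next
  case False
  then have "\<rho> < (1 - c) * exp c"
    by (simp add: exp_minus field_simps)
  then have "\<rho> * exp c < (1 - c) * exp c * exp c"
    by simp
  also have "\<dots> = exp (2 * c) * (1 - c)"
    by (simp add: mult_ac flip: exp_add)
  also have "\<dots> \<le> 1 + c"
    using assms(1) by (rule exp_double_mult_one_minus_le)
  finally show ?thesis using assms by linarith
qed

lemma tv_dist_commute: "tv_dist M f g = tv_dist M g f"
  by (simp add: tv_dist_def abs_minus_commute)

lemma tv_dist_eq_integral_pos_part:
  fixes f g :: "'a \<Rightarrow> real"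
  assumes "integrable M f" "integrable M g" "integral\<^sup>L M f = integral\<^sup>L M g"
  shows "tv_dist M f g = ennreal (\<integral>x. max 0 (f x - g x) \<partial>M)"
proof -
  have abs_eq: "\<bar>f x - g x\<bar> / 2 = max 0 (f x - g x) - (f x - g x) / 2" for x
    by (cases "f x \<le> g x") (simp_all add: max_def field_simps)
  have "tv_dist M f g = ennreal (\<integral>x. \<bar>f x - g x\<bar> / 2 \<partial>M)"
    unfolding tv_dist_def using assms by (intro nn_integral_eq_integral) auto
  also have "(\<integral>x. \<bar>f x - g x\<bar> / 2 \<partial>M) = (\<integral>x. max 0 (f x - g x) \<partial>M)"
    using assms by (simp add: abs_eq Bochner_Integration.integral_diff)
  finally show ?thesis .
qed

lemma integral_pos_part_le:
  fixes f g :: "'a \<Rightarrow> real"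
  assumes "integrable M g" "integrable M f" "\<And>x. f x \<ge> 0"
    and "AE x in M. g x \<le> a * f x"
  shows "(\<integral>x. max 0 (g x) \<partial>M) \<le> max 0 a * (\<integral>x. f x \<partial>M)"
proof -
  have "AE x in M. max 0 (g x) \<le> max 0 a * f x"
    using assms(4)
  proof eventually_elim
    case (elim x)
    have "a * f x \<le> max 0 a * f x"
      using assms(3) by (intro mult_right_mono) auto
    then show ?case
      using elim assms(3)[of x] by simp
  qed
  then have "(\<integral>x. max 0 (g x) \<partial>M) \<le> (\<integral>x. max 0 a * f x \<partial>M)"
    using assms(1,2) by (intro integral_mono_AE) auto
  then show ?thesis by simp
qed

lemma tv_dist_le_of_density_ratio_bounds:
  fixes f g :: "'a \<Rightarrow> real"
  assumes "integrable M f" "integrable M g" "\<And>x. f x \<ge> 0"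
    and "integral\<^sup>L M f = 1" "integral\<^sup>L M g = 1"
    and "c \<ge> 0" "\<rho> > 0"
    and "AE x in M. \<rho> * exp (- c) * f x \<le> g x \<and> g x \<le> \<rho> * exp c * f x"
  shows "tv_dist M f g \<le> ennreal c"
proof -
  define T where "T = (\<integral>x. max 0 (f x - g x) \<partial>M)"
  have "T \<le> max 0 (1 - \<rho> * exp (- c))"
  proof -
    have "AE x in M. f x - g x \<le> (1 - \<rho> * exp (- c)) * f x"
      using assms(8) by eventually_elim (simp add: algebra_simps)
    then show ?thesis
      unfolding T_def using integral_pos_part_le[of M _ f] assms by simp
  qed
  moreover have "T \<le> max 0 (\<rho> * exp c - 1)"
  proof -
    have "T = (\<integral>x. max 0 (g x - f x) \<partial>M)"
      using tv_dist_eq_integral_pos_part[of M f g] tv_dist_eq_integral_pos_part[of M g f] assms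
      by (simp add: T_def tv_dist_commute)
    moreover have "AE x in M. g x - f x \<le> (\<rho> * exp c - 1) * f x"
      using assms(8) by eventually_elim (simp add: algebra_simps)
    ultimately show ?thesis
      using integral_pos_part_le[of M _ f] assms by simp
  qed
  ultimately have "T \<le> c"
    using min_ratio_gaps_le[OF assms(6,7)] by linarith
  then show ?thesis
    using tv_dist_eq_integral_pos_part[of M f g] assms by (simp add: T_def ennreal_leI)
qed

lemma integral_mult_pos:
  fixes p q :: "'a \<Rightarrow> real"
  assumes "integrable M (\<lambda>x. q x * p x)" "\<And>x. q x \<ge> 0" "\<And>x. p x \<ge> 0"
    and "(\<integral>\<^sup>+ x. ennreal (p x) \<partial>M) \<noteq> 0"
    and "AE x in M. p x \<noteq> 0 \<longrightarrow> q x > 0"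
  shows "(\<integral>x. q x * p x \<partial>M) > 0"
proof (rule ccontr)
  assume "\<not> ?thesis"
  then have "(\<integral>x. q x * p x \<partial>M) = 0"
    using assms(2,3) by (simp add: Bochner_Integration.integral_nonneg order.antisym)
  then have "AE x in M. q x * p x = 0"
    using assms(1-3) by (simp add: integral_nonneg_eq_0_iff_AE)
  then have "AE x in M. ennreal (p x) = 0"
    using assms(5) by eventually_elim auto
  then have "(\<integral>\<^sup>+ x. ennreal (p x) \<partial>M) = (\<integral>\<^sup>+ x. 0 \<partial>M)"
    by (rule nn_integral_cong_AE)
  with assms(4) show False by simp
qed

lemma tv_dist_cond_dens_le_of_likelihood_ratio_bounds:
  fixes p Q :: "'a::euclidean_space \<Rightarrow> real"
  assumes int_a: "integrable M (\<lambda>x. Q (a - x) * p x)"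
    and int_b: "integrable M (\<lambda>x. Q (b - x) * p x)"
    and p_nonneg: "\<And>x. p x \<ge> 0" and Q_nonneg: "\<And>z. Q z \<ge> 0"
    and p_nonzero: "(\<integral>\<^sup>+ x. ennreal (p x) \<partial>M) \<noteq> 0"
    and "c \<ge> 0"
    and ratio: "AE x in M. p x \<noteq> 0 \<longrightarrow>
      Q (a - x) > 0 \<and> Q (b - x) \<le> exp c * Q (a - x) \<and> Q (a - x) \<le> exp c * Q (b - x)"
  shows "tv_dist M (cond_dens M p Q a) (cond_dens M p Q b) \<le> ennreal c"
proof -
  define Za where "Za = (\<integral>x. Q (a - x) * p x \<partial>M)"
  define Zb where "Zb = (\<integral>x. Q (b - x) * p x \<partial>M)"
  have "Za > 0"
    unfolding Za_def using int_a Q_nonneg p_nonneg p_nonzero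
  proof (rule integral_mult_pos)
    show "AE x in M. p x \<noteq> 0 \<longrightarrow> Q (a - x) > 0"
      using ratio by eventually_elim simp
  qed
  have "Zb > 0"
    unfolding Zb_def using int_b Q_nonneg p_nonneg p_nonzero
  proof (rule integral_mult_pos)
    show "AE x in M. p x \<noteq> 0 \<longrightarrow> Q (b - x) > 0"
      using ratio
    proof eventually_elim
      case (elim x)
      show ?case
      proof
        assume "p x \<noteq> 0"
        with elim have "0 < exp c * Q (b - x)"
          by linarith
        then show "Q (b - x) > 0"
          by (simp add: zero_less_mult_iff)
      qed
    qed
  qed
  have cond_dens_a: "cond_dens M p Q a = (\<lambda>x. Q (a - x) * p x / Za)"
    unfolding cond_dens_def Za_def by (simp add: mult.commute)
  have cond_dens_b: "cond_dens M p Q b = (\<lambda>x. Q (b - x) * p x / Zb)"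
    unfolding cond_dens_def Zb_def by (simp add: mult.commute)
  show ?thesis
    unfolding cond_dens_a cond_dens_b
  proof (rule tv_dist_le_of_density_ratio_bounds[where \<rho> = "Za / Zb"])
    show "AE x in M. Za / Zb * exp (- c) * (Q (a - x) * p x / Za) \<le> Q (b - x) * p x / Zb \<and>
        Q (b - x) * p x / Zb \<le> Za / Zb * exp c * (Q (a - x) * p x / Za)"
      using ratio
    proof eventually_elim
      case (elim x)
      show ?case
      proof (cases "p x = 0")
        case False
        then have "exp (- c) * Q (a - x) * p x \<le> Q (b - x) * p x"
          "Q (b - x) * p x \<le> exp c * Q (a - x) * p x"
          using elim p_nonneg[of x] by (auto simp: exp_minus field_simps intro: mult_right_mono)
        then show ?thesis
          using \<open>Za > 0\<close> \<open>Zb > 0\<close> by (simp add: divide_right_mono)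
      qed simp
    qed
  qed (use \<open>Za > 0\<close> \<open>Zb > 0\<close> int_a int_b Q_nonneg p_nonneg \<open>c \<ge> 0\<close> in \<open>simp_all add: Za_def Zb_def\<close>)
qed

lemma AE_outside_dens_support_eq_0:
  fixes M :: "'a::second_countable_topology measure"
  assumes M_borel: "sets M = sets borel" and "p \<in> borel_measurable M" and "\<And>x. p x \<ge> 0"
  shows "AE x in M. x \<notin> dens_support M p \<longrightarrow> p x = 0"
proof -
  define N where "N = density M (\<lambda>y. ennreal (p y))"
  define \<F> where "\<F> = {U. open U \<and> emeasure N U = 0}"
  have support: "dens_support M p = closure {x. \<forall>U. open U \<and> x \<in> U \<longrightarrow> emeasure N U > 0}"
    unfolding dens_support_def N_def ..
  have charged_subset: "{x. \<forall>U. open U \<and> x \<in> U \<longrightarrow> emeasure N U > 0} \<subseteq> dens_support M p"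
    unfolding support by (rule closure_subset)
  have sets_N: "sets N = sets borel"
    using M_borel by (simp add: N_def)
  obtain \<F>' where \<F>': "\<F>' \<subseteq> \<F>" "countable \<F>'" "\<Union>\<F>' = \<Union>\<F>"
    using Lindelof[of \<F>] by (auto simp: \<F>_def)
  have "U \<in> null_sets N" if "U \<in> \<F>'" for U
    using that \<F>'(1) sets_N by (auto simp: \<F>_def null_sets_def)
  then have "\<Union>\<F>' \<in> null_sets N"
    using null_sets_UN'[of \<F>' "\<lambda>U. U" N] \<F>'(2) by simp
  moreover have "- dens_support M p \<subseteq> \<Union>\<F>'"
  proof
    fix x
    assume "x \<in> - dens_support M p"
    then have "x \<notin> {x. \<forall>U. open U \<and> x \<in> U \<longrightarrow> emeasure N U > 0}"
      using charged_subset by (meson ComplD subsetD)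
    then obtain U where "open U" "x \<in> U" "emeasure N U = 0"
      by (auto simp: not_gr_zero)
    then show "x \<in> \<Union>\<F>'"
      unfolding \<F>'(3) \<F>_def by (intro UnionI[of U]) auto
  qed
  moreover have "- dens_support M p \<in> sets N"
    unfolding sets_N support by (intro borel_open) auto
  ultimately have "emeasure N (- dens_support M p) = 0"
    by (meson null_setsD1 null_sets_subset)
  then have "(\<integral>\<^sup>+x. ennreal (p x) * indicator (- dens_support M p) x \<partial>M) = 0"
    using \<open>- dens_support M p \<in> sets N\<close> assms
    by (simp add: N_def emeasure_density)
  then have "AE x in M. ennreal (p x) * indicator (- dens_support M p) x = 0"
    using \<open>- dens_support M p \<in> sets N\<close> assms by (simp add: nn_integral_0_iff_AE N_def)
  then show ?thesis
    by eventually_elim (auto simp: indicator_def assms(3))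
qed

lemma le_exp_mult_of_ln_gradient_bound:
  fixes Q :: "'a::real_inner \<Rightarrow> real"
  assumes "Q a > 0" "Q b > 0"
    and ln_deriv: "\<And>z. z \<in> closed_segment a b \<Longrightarrow>
      ((\<lambda>y. ln (Q y)) has_derivative (\<lambda>h. G z \<bullet> h)) (at z within closed_segment a b)"
    and G_bound: "\<And>z. z \<in> closed_segment a b \<Longrightarrow> norm (G z) \<le> B"
  shows "Q b \<le> exp (B * norm (b - a)) * Q a"
proof -
  have "norm (ln (Q b) - ln (Q a)) \<le> B * norm (b - a)"
  proof (rule differentiable_bound[OF convex_closed_segment ln_deriv])
    fix z
    assume "z \<in> closed_segment a b"
    have "onorm (\<lambda>h. G z \<bullet> h) \<le> norm (G z) * onorm (\<lambda>h::'a. h)"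
      by (rule onorm_inner_right) (rule bounded_linear_ident)
    also have "\<dots> \<le> norm (G z)"
      by (rule mult_left_le[OF onorm_id_le norm_ge_zero])
    also have "\<dots> \<le> B"
      using G_bound \<open>z \<in> closed_segment a b\<close> .
    finally show "onorm (\<lambda>h. G z \<bullet> h) \<le> B" .
  qed auto
  then have "ln (Q b) \<le> B * norm (b - a) + ln (Q a)"
    by simp
  then have "exp (ln (Q b)) \<le> exp (B * norm (b - a) + ln (Q a))"
    by simp
  with assms(1,2) show ?thesis
    by (simp add: exp_add)
qed

lemma closed_segment_diff_subset_seg_set:
  assumes "x \<in> S"
  shows "closed_segment (xt - x) (xt' - x) \<subseteq> seg_set S xt xt'"
proof
  fix z
  assume "z \<in> closed_segment (xt - x) (xt' - x)"
  then obtain t where t: "t \<in> {0..1}" "z = (1 - t) *\<^sub>R (xt - x) + t *\<^sub>R (xt' - x)"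
    unfolding closed_segment_def by auto
  then have "z = (1 - t) *\<^sub>R xt + t *\<^sub>R xt' - x"
    by (simp add: algebra_simps)
  with t(1) assms show "z \<in> seg_set S xt xt'"
    unfolding seg_set_def by blast
qed

lemma likelihood_ratio_bounds_of_ln_gradient_bound:
  fixes Q :: "'a::euclidean_space \<Rightarrow> real"
  assumes "x \<in> S"
    and ln_deriv: "\<forall>z\<in>seg_set S xt xt'.
      Q z > 0 \<and> ((\<lambda>y. ln (Q y)) has_derivative (\<lambda>h. G z \<bullet> h)) (at z)"
    and G_bound: "\<And>z. z \<in> seg_set S xt xt' \<Longrightarrow> norm (G z) \<le> B"
  shows "Q (xt - x) > 0 \<and> Q (xt' - x) \<le> exp (B * norm (xt - xt')) * Q (xt - x)
    \<and> Q (xt - x) \<le> exp (B * norm (xt - xt')) * Q (xt' - x)"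
proof -
  have ratio_le: "Q v \<le> exp (B * norm (v - u)) * Q u"
    if "closed_segment u v \<subseteq> seg_set S xt xt'" for u v
    using that ln_deriv G_bound
    by (intro le_exp_mult_of_ln_gradient_bound) (auto intro: has_derivative_at_withinI)
  have segment: "closed_segment (xt - x) (xt' - x) \<subseteq> seg_set S xt xt'"
    using \<open>x \<in> S\<close> by (rule closed_segment_diff_subset_seg_set)
  have "xt - x \<in> seg_set S xt xt'"
    using segment by auto
  with ln_deriv segment ratio_le[of "xt - x" "xt' - x"] ratio_le[of "xt' - x" "xt - x"] show ?thesis
    by (auto simp: closed_segment_commute norm_minus_commute)
qed

theorem proposition16:
  fixes M :: "'a::euclidean_space measure"
    and p Q :: "'a \<Rightarrow> real"
    and xt xt' :: 'a
    and DQ :: "'a \<Rightarrow> 'a" and HQ :: "'a \<Rightarrow> 'a \<Rightarrow>\<^sub>L 'a" and G :: "'a \<Rightarrow> 'a"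
  assumes M_prob: "prob_space M" and M_borel: "sets M = sets borel"
    and p_meas: "p \<in> borel_measurable M" and p_nonneg: "\<And>x. p x \<ge> 0"
    and p_dens: "(\<integral>\<^sup>+ x. ennreal (p x) \<partial>M) = 1"
    and Q_meas: "Q \<in> borel_measurable lborel" and Q_nonneg: "\<And>z. Q z \<ge> 0"
    and Q_dens: "(\<integral>\<^sup>+ z. ennreal (Q z) \<partial>lborel) = 1"
    and norm_xt: "integrable M (\<lambda>x. Q (xt - x) * p x)"
    and norm_xt': "integrable M (\<lambda>x. Q (xt' - x) * p x)"
    and grad_Q: "\<exists>S. open S \<and> seg_set (dens_support M p) xt xt' \<subseteq> S \<and>
                    (\<forall>y\<in>S. (Q has_derivative (\<lambda>h. DQ y \<bullet> h)) (at y))"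
    and hess_Q: "\<forall>z\<in>seg_set (dens_support M p) xt xt'. (DQ has_derivative blinfun_apply (HQ z)) (at z)"
    and hess_cont: "continuous_on (seg_set (dens_support M p) xt xt') HQ"
    and grad_logQ: "\<forall>z\<in>seg_set (dens_support M p) xt xt'.
                      Q z > 0 \<and> ((\<lambda>y. ln (Q y)) has_derivative (\<lambda>h. G z \<bullet> h)) (at z)"
    and grad_logQ_cont: "continuous_on (seg_set (dens_support M p) xt xt') G"
  shows "tv_dist M (cond_dens M p Q xt) (cond_dens M p Q xt')
           \<le> ennreal (norm (xt - xt')) * (SUP z\<in>seg_set (dens_support M p) xt xt'. ennreal (norm (G z)))"
proof -
  define L where "L = (SUP z\<in>seg_set (dens_support M p) xt xt'. ennreal (norm (G z)))"
  show ?thesis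
  proof (cases L)
    case top
    then show ?thesis
      by (cases "xt = xt'") (simp_all flip: L_def add: tv_dist_def ennreal_mult_top)
  next
    case (real B)
    have G_bound: "norm (G z) \<le> B" if "z \<in> seg_set (dens_support M p) xt xt'" for z
      using SUP_upper[OF that, of "\<lambda>z. ennreal (norm (G z))"] real by (simp add: L_def)
    have "AE x in M. p x \<noteq> 0 \<longrightarrow> Q (xt - x) > 0
        \<and> Q (xt' - x) \<le> exp (B * norm (xt - xt')) * Q (xt - x)
        \<and> Q (xt - x) \<le> exp (B * norm (xt - xt')) * Q (xt' - x)"
      using AE_outside_dens_support_eq_0[OF M_borel p_meas p_nonneg]
      by eventually_elim (use likelihood_ratio_bounds_of_ln_gradient_bound[OF _ grad_logQ G_bound] in blast)
    then have "tv_dist M (cond_dens M p Q xt) (cond_dens M p Q xt') \<le> ennreal (B * norm (xt - xt'))"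
      using p_dens real(1)
      by (intro tv_dist_cond_dens_le_of_likelihood_ratio_bounds[OF norm_xt norm_xt' p_nonneg Q_nonneg]) auto
    then show ?thesis
      using real by (simp add: L_def ennreal_mult mult.commute)
  qed
qed

end
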